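(* Let $(X_k)_{k\ge 1}$ be nonnegative random variables with partial sums $S_0=0$, $S_k=X_1+\dots+X_k$, and let $T$ be a nonnegative DFR random variable, independent of $(X_k)_{k\ge1}$, with survival function $\overline F_T(t)=P(T>t)$. Fix a natural number $n\ge 1$ and assume there exists an $N_n$-distributional version $\{(Z^{\mathbf x}_{n+1},Z^{\mathbf x}_{n+2}):\mathbf x\in N_n\}$ of $(X_{n+1},X_{n+2})$ given $(X_1,\dots,X_n)$ such that, for every DFR survival function $\overline H$ on $[0,\infty)$ with $\overline H(0)=1$ and every $\mathbf x\in N_n$, $$\big(E[\overline H(Z^{\mathbf x}_{n+1})]\big)^2\le E[\overline H(Z^{\mathbf x}_{n+1}+Z^{\mathbf x}_{n+2})].$$ Then $$\big(E[\overline F_T(S_{n+1})]\big)^2\le E[\overline F_T(S_n)]\,E[\overline F_T(S_{n+2})].$$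
   Context: A survival function $\overline G$ (of a nonnegative random variable) is DFR (decreasing failure rate) if for every $z\ge 0$ the map $t\mapsto \overline G(z+t)/\overline G(t)$ is increasing (on $\{t:\overline G(t)>0\}$); a random variable is DFR if its survival function is. Regular conditional distributions: let $F_n$ be the law of $(X_1,\dots,X_n)$ and let $N_n\subseteq\mathbb R_+^n$ be a Borel set with $P((X_1,\dots,X_n)\in N_n)=1$. A family $\{\mu^{\mathbf x}:\mathbf x\in N_n\}$ of probability measures on $\mathbb R_+^m$, such that $\mathbf x\mapsto\mu^{\mathbf x}(B)$ is measurable for every Borel $B\subseteq\mathbb R_+^m$, is an $N_n$ regular conditional distribution of $(X_{n+1},\dots,X_{n+m})$ given $(X_1,\dots,X_n)$ if for all Borel $A\subseteq N_n$ and $B\subseteq\mathbb R_+^m$, $P((X_1,\dots,X_n)\in A,(X_{n+1},\dots,X_{n+m})\in B)=\int_A\mu^{\mathbf x}(B)\,dF_n(\mathbf x)$. An $N_n$-distributional version of $(X_{n+1},\dots,X_{n+m})$ given $(X_1,\dots,X_n)$ is a family of random vectors $\{(Z^{\mathbf x}_{n+1},\dots,Z^{\mathbf x}_{n+m}):\mathbf x\in N_n\}$ (not necessarily on a common probability space) such that $(Z^{\mathbf x}_{n+1},\dots,Z^{\mathbf x}_{n+m})$ has law $\mu^{\mathbf x}$ for each $\mathbf x$, where $\{\mu^{\mathbf x}\}$ is such a regular conditional distribution. *)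

theory Defs
  imports "HOL-Probability.Probability"
begin

definition survival_function :: "(real \<Rightarrow> real) \<Rightarrow> bool" where
  "survival_function G \<longleftrightarrow>
     (\<exists>N. real_distribution N \<and> measure N {..<0} = 0 \<and> (\<forall>t. G t = measure N {t<..}))"

definition DFR :: "(real \<Rightarrow> real) \<Rightarrow> bool" where
  "DFR G \<longleftrightarrow> (\<forall>z\<ge>0. \<forall>s t. 0 \<le> s \<and> s \<le> t \<and> G s > 0 \<and> G t > 0 \<longrightarrow>
                 G (z + s) / G s \<le> G (z + t) / G t)"

definition first_law :: "'a measure \<Rightarrow> (nat \<Rightarrow> 'a \<Rightarrow> real) \<Rightarrow> nat \<Rightarrow> (nat \<Rightarrow> real) measure" where
  "first_law M X n = distr M (Pi\<^sub>M {1..n} (\<lambda>_. borel)) (\<lambda>\<omega>. \<lambda>i\<in>{1..n}. X i \<omega>)"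

definition regular_cond_distr ::
  "'a measure \<Rightarrow> (nat \<Rightarrow> 'a \<Rightarrow> real) \<Rightarrow> nat \<Rightarrow> (nat \<Rightarrow> real) set
    \<Rightarrow> ((nat \<Rightarrow> real) \<Rightarrow> (real \<times> real) measure) \<Rightarrow> bool" where
  "regular_cond_distr M X n N \<mu> \<longleftrightarrow>
     N \<in> sets (Pi\<^sub>M {1..n} (\<lambda>_. borel)) \<and>
     N \<subseteq> {x. \<forall>i\<in>{1..n}. 0 \<le> x i} \<and>
     measure M {\<omega>\<in>space M. (\<lambda>i\<in>{1..n}. X i \<omega>) \<in> N} = 1 \<and>
     (\<forall>x\<in>N. prob_space (\<mu> x) \<and> sets (\<mu> x) = sets (borel :: (real \<times> real) measure) \<and>
              measure (\<mu> x) {z. 0 \<le> fst z \<and> 0 \<le> snd z} = 1) \<and>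
     (\<forall>B\<in>sets (borel :: (real \<times> real) measure). B \<subseteq> {z. 0 \<le> fst z \<and> 0 \<le> snd z} \<longrightarrow>
        (\<lambda>x. emeasure (\<mu> x) B) \<in> borel_measurable (restrict_space (Pi\<^sub>M {1..n} (\<lambda>_. borel)) N)) \<and>
     (\<forall>A\<in>sets (Pi\<^sub>M {1..n} (\<lambda>_. borel)). \<forall>B\<in>sets (borel :: (real \<times> real) measure).
        A \<subseteq> N \<longrightarrow> B \<subseteq> {z. 0 \<le> fst z \<and> 0 \<le> snd z} \<longrightarrow>
        emeasure M {\<omega>\<in>space M. (\<lambda>i\<in>{1..n}. X i \<omega>) \<in> A \<and> (X (n+1) \<omega>, X (n+2) \<omega>) \<in> B}
          = (\<integral>\<^sup>+ x. emeasure (\<mu> x) B * indicator A x \<partial>first_law M X n))"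

definition partial_sum :: "(nat \<Rightarrow> 'a \<Rightarrow> real) \<Rightarrow> nat \<Rightarrow> 'a \<Rightarrow> real" where
  "partial_sum X k \<omega> = (\<Sum>i\<in>{1..k}. X i \<omega>)"

end

theory Submission
  imports Defs
begin

text \<open>Condition on \<open>(X\<^sub>1, \<dots>, X\<^sub>n) = x\<close> and write \<open>s\<close> for the sum of \<open>x\<close> and \<open>F\<close> for the
  survival function of \<open>T\<close>. If \<open>F s > 0\<close>, the residual life survival function
  \<open>H t = F (s + t) / F s\<close> is again DFR with \<open>H 0 = 1\<close>, so the hypothesis on the conditional law of
  \<open>(X\<^sub>n\<^sub>+\<^sub>1, X\<^sub>n\<^sub>+\<^sub>2)\<close> yields \<open>(E F (s + Z\<^sub>1))\<^sup>2 \<le> F s \<cdot> E F (s + Z\<^sub>1 + Z\<^sub>2)\<close>; if \<open>F s = 0\<close> this is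
  trivial since \<open>F\<close> is decreasing. Integrating over the law of \<open>(X\<^sub>1, \<dots>, X\<^sub>n)\<close>, the Cauchy-Schwarz
  inequality \<open>(\<integral>b)\<^sup>2 \<le> \<integral>a \<cdot> \<integral>c\<close> for \<open>b\<^sup>2 \<le> a c\<close> turns these pointwise bounds into the claim.\<close>

lemma two_mult_le_add_divide:
  fixes a b c l :: real
  assumes "0 \<le> a" "0 \<le> c" "b\<^sup>2 \<le> a * c" "0 < l"
  shows "2 * b \<le> l * a + c / l"
proof (rule power2_le_imp_le)
  have "(l * a + c / l)\<^sup>2 - 4 * (a * c) = (l * a - c / l)\<^sup>2"
    using \<open>0 < l\<close> by (simp add: power2_eq_square field_simps)
  moreover have "(2 * b)\<^sup>2 = 4 * b\<^sup>2" by (simp add: power_mult_distrib)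
  ultimately show "(2 * b)\<^sup>2 \<le> (l * a + c / l)\<^sup>2"
    using assms(3) zero_le_power2[of "l * a - c / l"] by linarith
  show "0 \<le> l * a + c / l" using assms by simp
qed

lemma integral_square_le_mult_integral:
  fixes a b c :: "'b \<Rightarrow> real"
  assumes int: "integrable M a" "integrable M b" "integrable M c"
    and nonneg: "AE x in M. 0 \<le> a x" "AE x in M. 0 \<le> b x" "AE x in M. 0 \<le> c x"
    and le: "AE x in M. (b x)\<^sup>2 \<le> a x * c x"
  shows "(\<integral>x. b x \<partial>M)\<^sup>2 \<le> (\<integral>x. a x \<partial>M) * (\<integral>x. c x \<partial>M)"
proof -
  define A B C where "A = (\<integral>x. a x \<partial>M)" "B = (\<integral>x. b x \<partial>M)" "C = (\<integral>x. c x \<partial>M)"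
  have "A \<ge> 0" "B \<ge> 0" "C \<ge> 0"
    unfolding A_B_C_def using nonneg by (auto intro: integral_nonneg_AE)
  have AM_GM: "2 * B \<le> l * A + C / l" if "l > 0" for l
  proof -
    have "AE x in M. 2 * b x \<le> l * a x + c x / l"
      using nonneg le by eventually_elim (use \<open>l > 0\<close> in \<open>simp add: two_mult_le_add_divide\<close>)
    then have "(\<integral>x. 2 * b x \<partial>M) \<le> (\<integral>x. l * a x + c x / l \<partial>M)"
      using int by (intro integral_mono_AE) auto
    then show ?thesis using int by (simp add: A_B_C_def)
  qed
  show ?thesis
  proof (cases "A > 0 \<and> B > 0")
    case True
    have "2 * B \<le> B + C * A / B"
      using AM_GM[of "B / A"] True by (simp add: field_simps)
    then have "B * B \<le> C * A"
      using True by (simp add: field_simps)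
    then show ?thesis by (simp add: A_B_C_def power2_eq_square mult.commute)
  next
    case False
    have "B = 0"
    proof (rule ccontr)
      assume "B \<noteq> 0"
      with False \<open>A \<ge> 0\<close> \<open>B \<ge> 0\<close> have "A = 0" "B > 0" by auto
      then have "2 * B \<le> C * B / (C + 1)"
        using AM_GM[of "(C + 1) / B"] \<open>C \<ge> 0\<close> by simp
      also have "\<dots> < B"
        using \<open>B > 0\<close> \<open>C \<ge> 0\<close> by (simp add: divide_less_eq)
      finally show False using \<open>B > 0\<close> by simp
    qed
    then show ?thesis using \<open>A \<ge> 0\<close> \<open>C \<ge> 0\<close> by (simp add: A_B_C_def)
  qed
qed

section \<open>Survival functions and residual lives\<close>

definition survival :: "'a measure \<Rightarrow> ('a \<Rightarrow> real) \<Rightarrow> real \<Rightarrow> real" where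
  "survival M T t = measure M {\<omega>\<in>space M. t < T \<omega>}"

lemma survival_nonneg: "0 \<le> survival M T t"
  by (simp add: survival_def)

lemma (in prob_space) survival_le_1: "survival M T t \<le> 1"
  by (simp add: survival_def)

lemma survival_antimono:
  fixes T :: "'a \<Rightarrow> real"
  assumes "finite_measure M" "T \<in> borel_measurable M"
  shows "antimono (survival M T)"
proof (rule antimonoI)
  interpret finite_measure M by fact
  show "survival M T t \<le> survival M T s" if "s \<le> t" for s t
  proof -
    have "{\<omega>\<in>space M. s < T \<omega>} \<in> sets M" using assms(2) by measurable
    then show ?thesis
      unfolding survival_def using that by (intro finite_measure_mono) auto
  qed
qed

lemma borel_measurable_survival:
  fixes T :: "'a \<Rightarrow> real"
  assumes "finite_measure M" "T \<in> borel_measurable M"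
  shows "survival M T \<in> borel_measurable borel"
proof -
  have "mono (\<lambda>t. - survival M T t)"
    using survival_antimono[OF assms] by (simp add: mono_def antimono_def)
  then have "(\<lambda>t. - (- survival M T t)) \<in> borel_measurable borel"
    by (intro borel_measurable_uminus borel_measurable_mono)
  then show ?thesis by simp
qed

text \<open>The survival function of the residual life \<open>T - s\<close> given \<open>T > s\<close>, where \<open>F\<close> is that of \<open>T\<close>;
  it is \<open>1\<close> on the negative half-line.\<close>
definition residual :: "(real \<Rightarrow> real) \<Rightarrow> real \<Rightarrow> real \<Rightarrow> real" where
  "residual F s t = (if t < 0 then 1 else F (s + t) / F s)"

lemma residual_0 [simp]: "F s \<noteq> 0 \<Longrightarrow> residual F s 0 = 1"
  by (simp add: residual_def)

lemma DFR_residual: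
  assumes "DFR F" "0 \<le> s" "0 < F s"
  shows "DFR (residual F s)"
  unfolding DFR_def
proof (intro allI impI)
  fix z a b :: real
  assume z: "0 \<le> z" and ab: "0 \<le> a \<and> a \<le> b \<and> 0 < residual F s a \<and> 0 < residual F s b"
  then have "0 < F (s + a)" "0 < F (s + b)"
    using \<open>0 < F s\<close> by (auto simp: residual_def zero_less_divide_iff)
  moreover have "0 \<le> s + a" "s + a \<le> s + b" using assms(2) ab by auto
  ultimately have "F (z + (s + a)) / F (s + a) \<le> F (z + (s + b)) / F (s + b)"
    using assms(1) z unfolding DFR_def by blast
  moreover have "residual F s (z + c) / residual F s c = F (z + (s + c)) / F (s + c)"
    if "0 \<le> c" for c
    using z that \<open>0 < F s\<close> by (simp add: residual_def add.left_commute)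
  ultimately show "residual F s (z + a) / residual F s a \<le> residual F s (z + b) / residual F s b"
    using ab by simp
qed

lemma survival_function_residual:
  fixes T :: "'a \<Rightarrow> real"
  assumes "prob_space M" and T [measurable]: "T \<in> borel_measurable M"
    and pos: "0 < survival M T s"
  shows "survival_function (residual (survival M T) s)"
proof -
  interpret prob_space M by fact
  define A where "A = {\<omega>\<in>space M. s < T \<omega>}"
  have A [measurable]: "A \<in> sets M" unfolding A_def by measurable
  define R where "R = distr (uniform_measure M A) borel (\<lambda>\<omega>. T \<omega> - s)"
  have "survival M T s = measure M A" by (simp add: A_def survival_def)
  with pos have A_pos: "emeasure M A \<noteq> 0" by (simp add: emeasure_eq_measure)
  then interpret U: prob_space "uniform_measure M A" by (intro prob_space_uniform_measure) auto
  have R_measure: "measure R B = measure M (A \<inter> {\<omega>\<in>space M. T \<omega> - s \<in> B}) / measure M A"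
    if [measurable]: "B \<in> sets borel" for B
  proof -
    have "measure R B = measure (uniform_measure M A) {\<omega>\<in>space M. T \<omega> - s \<in> B}"
      unfolding R_def by (subst measure_distr) (auto simp: vimage_def Int_def conj_ac)
    also have "\<dots> = measure M (A \<inter> {\<omega>\<in>space M. T \<omega> - s \<in> B}) / measure M A"
      using A_pos by (intro measure_uniform_measure) auto
    finally show ?thesis .
  qed
  have R_distribution: "real_distribution R"
    unfolding R_def real_distribution_def real_distribution_axioms_def
    by (auto intro: U.prob_space_distr)
  have "A \<inter> {\<omega>\<in>space M. T \<omega> - s \<in> {..<0}} = {}" by (auto simp: A_def)
  then have R_negative: "measure R {..<0} = 0" by (simp add: R_measure)
  have R_tail: "residual (survival M T) s t = measure R {t<..}" for t
  proof (cases "t < 0")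
    case True
    then have "A \<inter> {\<omega>\<in>space M. T \<omega> - s \<in> {t<..}} = A" by (auto simp: A_def)
    then show ?thesis using True A_pos by (simp add: R_measure residual_def emeasure_eq_measure)
  next
    case False
    then have "A \<inter> {\<omega>\<in>space M. T \<omega> - s \<in> {t<..}} = {\<omega>\<in>space M. s + t < T \<omega>}"
      by (auto simp: A_def)
    moreover have "residual (survival M T) s t = survival M T (s + t) / measure M A"
      using False \<open>survival M T s = measure M A\<close> by (simp add: residual_def)
    ultimately show ?thesis by (simp add: R_measure survival_def)
  qed
  show ?thesis
    unfolding survival_function_def using R_distribution R_negative R_tail by blast
qed

lemma partial_sum_Suc: "partial_sum X (Suc k) \<omega> = partial_sum X k \<omega> + X (Suc k) \<omega>"
  by (simp add: partial_sum_def)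

lemma borel_measurable_residual [measurable]:
  assumes [measurable]: "F \<in> borel_measurable borel"
  shows "residual F s \<in> borel_measurable borel"
  unfolding residual_def[abs_def] by measurable

lemma square_integral_shift_le:
  fixes F :: "real \<Rightarrow> real" and K :: "(real \<times> real) measure"
  assumes K: "prob_space K" "sets K = sets borel" "AE z in K. 0 \<le> fst z \<and> 0 \<le> snd z"
    and F [measurable]: "F \<in> borel_measurable borel"
    and F_antimono: "antimono F" and F_bounds: "\<And>t. 0 \<le> F t \<and> F t \<le> 1"
    and residual_le: "0 < F s \<Longrightarrow>
      (\<integral>z. residual F s (fst z) \<partial>K)\<^sup>2 \<le> (\<integral>z. residual F s (fst z + snd z) \<partial>K)"
  shows "(\<integral>z. F (s + fst z) \<partial>K)\<^sup>2 \<le> F s * (\<integral>z. F (s + fst z + snd z) \<partial>K)"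
proof -
  interpret K: prob_space K by fact
  have meas: "f \<in> borel_measurable K" if "f \<in> borel_measurable (borel \<Otimes>\<^sub>M borel)" for f :: "_ \<Rightarrow> real"
    using that by (subst measurable_cong_sets[OF K(2) refl]) (simp add: borel_prod)
  show ?thesis
  proof (cases "F s = 0")
    case True
    have "AE z in K. F (s + fst z) = 0"
      using K(3)
    proof eventually_elim
      case (elim z)
      then have "F (s + fst z) \<le> F s" using F_antimono by (simp add: antimonoD)
      then show ?case using True F_bounds[of "s + fst z"] by simp
    qed
    then have "(\<integral>z. F (s + fst z) \<partial>K) = 0"
      by (simp add: integral_cong_AE[where g="\<lambda>_. 0"] meas)
    then show ?thesis using True by simp
  next
    case False
    then have pos: "0 < F s" using F_bounds[of s] by simp
    have "AE z in K. residual F s (fst z) = F (s + fst z) / F s"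
      using K(3) by eventually_elim (simp add: residual_def)
    then have "(\<integral>z. residual F s (fst z) \<partial>K) = (\<integral>z. F (s + fst z) / F s \<partial>K)"
      by (intro integral_cong_AE meas) auto
    moreover have "AE z in K. residual F s (fst z + snd z) = F (s + fst z + snd z) / F s"
      using K(3) by eventually_elim (simp add: residual_def add.assoc)
    then have "(\<integral>z. residual F s (fst z + snd z) \<partial>K) = (\<integral>z. F (s + fst z + snd z) / F s \<partial>K)"
      by (intro integral_cong_AE meas) auto
    ultimately have "((\<integral>z. F (s + fst z) \<partial>K) / F s)\<^sup>2 \<le> (\<integral>z. F (s + fst z + snd z) \<partial>K) / F s"
      using residual_le[OF pos] by simp
    then show ?thesis
      using pos by (simp add: power_divide divide_le_eq power2_eq_square field_simps)
  qed
qed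

section \<open>Disintegration along a regular conditional distribution\<close>

text \<open>Keeps \<open>{1..n}\<close> from being rewritten to \<open>{Suc 0..n}\<close>, which would no longer match \<open>past_space\<close>.\<close>
declare One_nat_def [simp del]

locale regular_cond_pair = prob_space M
  for M :: "'a measure" and X :: "nat \<Rightarrow> 'a \<Rightarrow> real" and n :: nat
    and N :: "(nat \<Rightarrow> real) set" and \<mu> :: "(nat \<Rightarrow> real) \<Rightarrow> (real \<times> real) measure" +
  assumes measurable_X [measurable]: "\<And>k. X k \<in> borel_measurable M"
    and nonneg_next: "\<And>\<omega>. \<omega> \<in> space M \<Longrightarrow> 0 \<le> X (n + 1) \<omega> \<and> 0 \<le> X (n + 2) \<omega>"
    and regular_cond_distr: "regular_cond_distr M X n N \<mu>"
begin

abbreviation past_space :: "(nat \<Rightarrow> real) measure" where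
  "past_space \<equiv> Pi\<^sub>M {1..n} (\<lambda>_. borel)"

abbreviation quadrant :: "(real \<times> real) set" where
  "quadrant \<equiv> {z. 0 \<le> fst z \<and> 0 \<le> snd z}"

definition past :: "'a \<Rightarrow> nat \<Rightarrow> real" where
  "past \<omega> = (\<lambda>i\<in>{1..n}. X i \<omega>)"

definition future :: "'a \<Rightarrow> real \<times> real" where
  "future \<omega> = (X (n + 1) \<omega>, X (n + 2) \<omega>)"

text \<open>\<open>\<mu>\<close> is only specified on \<open>N\<close>; a point mass elsewhere makes it a kernel on all of \<open>past_space\<close>.\<close>
definition cond_kernel :: "(nat \<Rightarrow> real) \<Rightarrow> (real \<times> real) measure" where
  "cond_kernel x = (if x \<in> N then \<mu> x else return borel (0, 0))"

lemma measurable_past [measurable]: "past \<in> measurable M past_space"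
  unfolding past_def by measurable

lemma measurable_future [measurable]: "future \<in> borel_measurable M"
  unfolding future_def by measurable

lemma pred_quadrant [measurable]: "Measurable.pred borel (\<lambda>z::real \<times> real. 0 \<le> fst z \<and> 0 \<le> snd z)"
  unfolding borel_prod[symmetric] by measurable

lemma quadrant_sets [measurable]: "quadrant \<in> sets borel"
  using pred_quadrant by (simp add: pred_def)

lemma future_in_quadrant: "\<omega> \<in> space M \<Longrightarrow> future \<omega> \<in> quadrant"
  using nonneg_next by (simp add: future_def)

lemma first_law_eq: "first_law M X n = distr M past_space past"
  unfolding first_law_def past_def[abs_def] by (rule refl)

lemma sets_first_law [measurable_cong, simp]: "sets (first_law M X n) = sets past_space"
  and space_first_law [simp]: "space (first_law M X n) = space past_space"
  by (simp_all add: first_law_eq)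

lemma prob_space_first_law: "prob_space (first_law M X n)"
  unfolding first_law_eq by (rule prob_space_distr) (rule measurable_past)

lemma N_sets [measurable]: "N \<in> sets past_space"
  and N_nonneg: "x \<in> N \<Longrightarrow> i \<in> {1..n} \<Longrightarrow> 0 \<le> x i"
  and prob_space_mu: "x \<in> N \<Longrightarrow> prob_space (\<mu> x)"
  and sets_mu: "x \<in> N \<Longrightarrow> sets (\<mu> x) = sets borel"
  and measurable_emeasure_mu: "B \<in> sets borel \<Longrightarrow> B \<subseteq> quadrant \<Longrightarrow>
      (\<lambda>x. emeasure (\<mu> x) B) \<in> borel_measurable (restrict_space past_space N)"
  and emeasure_past_future: "A \<in> sets past_space \<Longrightarrow> B \<in> sets borel \<Longrightarrow> A \<subseteq> N \<Longrightarrow> B \<subseteq> quadrant \<Longrightarrow>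
      emeasure M {\<omega>\<in>space M. past \<omega> \<in> A \<and> future \<omega> \<in> B}
        = (\<integral>\<^sup>+ x. emeasure (\<mu> x) B * indicator A x \<partial>first_law M X n)"
  using regular_cond_distr unfolding regular_cond_distr_def past_def future_def by auto

lemma AE_past_in_N: "AE \<omega> in M. past \<omega> \<in> N"
proof -
  have "measure M {\<omega>\<in>space M. past \<omega> \<in> N} = 1"
    using regular_cond_distr by (simp add: regular_cond_distr_def past_def)
  then have "AE \<omega> in M. \<omega> \<in> {\<omega>\<in>space M. past \<omega> \<in> N}" by (intro AE_prob_1) auto
  then show ?thesis by auto
qed

lemma AE_first_law_N: "AE x in first_law M X n. x \<in> N"
proof -
  have "{x \<in> space past_space. x \<in> N} \<in> sets past_space" by measurable
  then show ?thesis
    unfolding first_law_eq using AE_past_in_N by (subst AE_distr_iff[OF measurable_past])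
qed

lemma AE_mu_quadrant: "x \<in> N \<Longrightarrow> AE z in \<mu> x. z \<in> quadrant"
  using regular_cond_distr prob_space_mu
  by (intro prob_space.AE_prob_1) (auto simp: regular_cond_distr_def)

lemma emeasure_mu_Int_quadrant:
  assumes "x \<in> N" "B \<in> sets borel"
  shows "emeasure (\<mu> x) B = emeasure (\<mu> x) (B \<inter> quadrant)"
proof (rule emeasure_eq_AE)
  show "AE z in \<mu> x. (z \<in> B) = (z \<in> B \<inter> quadrant)"
    using AE_mu_quadrant[OF assms(1)] by eventually_elim auto
qed (use assms sets_mu in auto)

lemma sets_cond_kernel [measurable_cong, simp]: "sets (cond_kernel x) = sets borel"
  by (simp add: cond_kernel_def sets_mu)

lemma prob_space_cond_kernel: "prob_space (cond_kernel x)"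
  by (simp add: cond_kernel_def prob_space_mu prob_space_return)

lemma AE_cond_kernel_nonneg: "AE z in cond_kernel x. 0 \<le> fst z \<and> 0 \<le> snd z"
proof (cases "x \<in> N")
  case False
  have "AE z in return borel (0::real, 0::real). 0 \<le> fst z \<and> 0 \<le> snd z"
    by (subst AE_return) auto
  with False show ?thesis unfolding cond_kernel_def by simp
next
  case True
  then show ?thesis unfolding cond_kernel_def using AE_mu_quadrant[OF True] by simp
qed

lemma measurable_cond_kernel [measurable]:
  "cond_kernel \<in> measurable past_space (subprob_algebra borel)"
proof (rule measurable_subprob_algebra)
  show "subprob_space (cond_kernel x)" for x
    by (simp add: prob_space_cond_kernel prob_space_imp_subprob_space)
next
  fix B :: "(real \<times> real) set"
  assume B [measurable]: "B \<in> sets borel"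
  have eq: "(\<lambda>x. emeasure (cond_kernel x) B)
      = (\<lambda>x. if x \<in> N then emeasure (\<mu> x) (B \<inter> quadrant) else emeasure (return borel (0, 0)) B)"
    by (intro ext) (simp add: cond_kernel_def emeasure_mu_Int_quadrant[OF _ B, symmetric])
  have "{x\<in>space past_space. x \<in> N} \<in> sets past_space" by measurable
  then show "(\<lambda>x. emeasure (cond_kernel x) B) \<in> borel_measurable past_space"
    unfolding eq using measurable_emeasure_mu[of "B \<inter> quadrant"]
    by (subst measurable_If_restrict_space_iff) auto
qed simp

lemma measurable_Pair_cond_kernel:
  assumes "x \<in> space past_space"
  shows "Pair x \<in> measurable (cond_kernel x) (past_space \<Otimes>\<^sub>M borel)"
proof -
  have "measurable (cond_kernel x) (past_space \<Otimes>\<^sub>M borel) = measurable borel (past_space \<Otimes>\<^sub>M borel)"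
    by (rule measurable_cong_sets) simp_all
  then show ?thesis using measurable_Pair1'[OF assms] by blast
qed

lemma measurable_joint_kernel [measurable]:
  "(\<lambda>x. distr (cond_kernel x) (past_space \<Otimes>\<^sub>M borel) (Pair x))
    \<in> measurable past_space (subprob_algebra (past_space \<Otimes>\<^sub>M borel))"
  by (rule measurable_distr2[where f=Pair, OF _ measurable_cond_kernel]) simp

lemma emeasure_past_future_cond_kernel:
  assumes [measurable]: "a \<in> sets past_space" and b [measurable]: "b \<in> sets borel"
  shows "emeasure M {\<omega>\<in>space M. past \<omega> \<in> a \<and> future \<omega> \<in> b}
    = (\<integral>\<^sup>+ x. emeasure (cond_kernel x) b * indicator a x \<partial>first_law M X n)"
proof -
  \<comment> \<open>The defining property of \<open>\<mu>\<close> only covers rectangles inside \<open>N \<times> quadrant\<close>; the rest is null.\<close>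
  have "emeasure M {\<omega>\<in>space M. past \<omega> \<in> a \<and> future \<omega> \<in> b}
      = emeasure M {\<omega>\<in>space M. past \<omega> \<in> a \<inter> N \<and> future \<omega> \<in> b \<inter> quadrant}"
    by (rule emeasure_eq_AE) (use AE_past_in_N future_in_quadrant in auto)
  also have "\<dots> = (\<integral>\<^sup>+ x. emeasure (\<mu> x) (b \<inter> quadrant) * indicator (a \<inter> N) x \<partial>first_law M X n)"
    by (rule emeasure_past_future) auto
  also have "\<dots> = (\<integral>\<^sup>+ x. emeasure (cond_kernel x) b * indicator a x \<partial>first_law M X n)"
    using AE_first_law_N
    by (intro nn_integral_cong_AE, eventually_elim)
       (simp add: cond_kernel_def indicator_def emeasure_mu_Int_quadrant[OF _ b])
  finally show ?thesis .
qed

lemma distr_past_future_eq_bind: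
  "distr M (past_space \<Otimes>\<^sub>M borel) (\<lambda>\<omega>. (past \<omega>, future \<omega>))
    = first_law M X n \<bind> (\<lambda>x. distr (cond_kernel x) (past_space \<Otimes>\<^sub>M borel) (Pair x))"
    (is "?D = first_law M X n \<bind> ?K")
proof -
  let ?E = "{a \<times> b |a b. a \<in> sets past_space \<and> b \<in> sets (borel :: (real \<times> real) measure)}"
  let ?\<Omega> = "space past_space \<times> (UNIV :: (real \<times> real) set)"
  have K: "?K \<in> measurable (first_law M X n) (subprob_algebra (past_space \<Otimes>\<^sub>M borel))"
    by measurable
  have nonempty: "space (first_law M X n) \<noteq> {}"
    using prob_space.not_empty[OF prob_space_first_law] .
  show ?thesis
  proof (rule measure_eqI_generator_eq[OF Int_stable_pair_measure_generator, where \<Omega>="?\<Omega>" and A="\<lambda>_. ?\<Omega>"])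
    show "?E \<subseteq> Pow ?\<Omega>"
      using sets.sets_into_space by fastforce
    show "sets ?D = sigma_sets ?\<Omega> ?E"
      by (simp add: sets_pair_measure)
    show "sets (first_law M X n \<bind> ?K) = sigma_sets ?\<Omega> ?E"
      using nonempty by (subst sets_bind[where N="past_space \<Otimes>\<^sub>M borel"]) (auto simp: sets_pair_measure)
    show "range (\<lambda>_. ?\<Omega>) \<subseteq> ?E" "(\<Union>i::nat. ?\<Omega>) = ?\<Omega>" by force+
    interpret D: prob_space ?D by (rule prob_space_distr) simp
    show "emeasure ?D ?\<Omega> \<noteq> \<infinity>" for i :: nat
      using D.emeasure_finite by simp
  next
    fix E assume "E \<in> ?E"
    then obtain a b where E: "E = a \<times> b" and [measurable]: "a \<in> sets past_space" "b \<in> sets borel"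
      by blast
    have "emeasure ?D E = emeasure M {\<omega>\<in>space M. past \<omega> \<in> a \<and> future \<omega> \<in> b}"
      unfolding E by (subst emeasure_distr) (auto intro!: arg_cong[where f="emeasure M"])
    also have "\<dots> = (\<integral>\<^sup>+ x. emeasure (cond_kernel x) b * indicator a x \<partial>first_law M X n)"
      by (rule emeasure_past_future_cond_kernel) simp_all
    also have "\<dots> = (\<integral>\<^sup>+ x. emeasure (?K x) E \<partial>first_law M X n)"
    proof (rule nn_integral_cong)
      fix x assume "x \<in> space (first_law M X n)"
      then have "emeasure (?K x) E = emeasure (cond_kernel x) (Pair x -` E)"
        using measurable_Pair_cond_kernel by (subst emeasure_distr) (auto simp: E)
      also have "Pair x -` E = (if x \<in> a then b else {})" by (auto simp: E)
      finally show "emeasure (cond_kernel x) b * indicator a x = emeasure (?K x) E"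
        by (simp add: indicator_def)
    qed
    also have "\<dots> = emeasure (first_law M X n \<bind> ?K) E"
      using nonempty by (rule emeasure_bind[symmetric, OF _ K]) (simp add: E)
    finally show "emeasure ?D E = emeasure (first_law M X n \<bind> ?K) E" .
  qed
qed

lemma integral_joint_kernel:
  fixes g :: "(nat \<Rightarrow> real) \<Rightarrow> real \<times> real \<Rightarrow> real"
  assumes [measurable]: "case_prod g \<in> borel_measurable (past_space \<Otimes>\<^sub>M borel)"
    and "x \<in> space past_space"
  shows "(\<integral>y. case_prod g y \<partial>distr (cond_kernel x) (past_space \<Otimes>\<^sub>M borel) (Pair x))
    = (\<integral>z. g x z \<partial>cond_kernel x)"
  by (subst integral_distr[OF measurable_Pair_cond_kernel[OF assms(2)]]) simp_all

lemma borel_measurable_integral_cond_kernel [measurable]: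
  fixes g :: "(nat \<Rightarrow> real) \<Rightarrow> real \<times> real \<Rightarrow> real"
  assumes [measurable]: "case_prod g \<in> borel_measurable (past_space \<Otimes>\<^sub>M borel)"
  shows "(\<lambda>x. \<integral>z. g x z \<partial>cond_kernel x) \<in> borel_measurable past_space"
proof -
  have "(\<lambda>x. \<integral>y. case_prod g y \<partial>distr (cond_kernel x) (past_space \<Otimes>\<^sub>M borel) (Pair x))
      \<in> borel_measurable past_space"
    by measurable
  then show ?thesis
    by (rule measurable_cong[THEN iffD1, rotated]) (simp add: integral_joint_kernel)
qed

lemma integral_past_future:
  fixes g :: "(nat \<Rightarrow> real) \<Rightarrow> real \<times> real \<Rightarrow> real"
  assumes g [measurable]: "case_prod g \<in> borel_measurable (past_space \<Otimes>\<^sub>M borel)"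
    and bounded: "\<And>x z. \<bar>g x z\<bar> \<le> c"
  shows "(\<integral>\<omega>. g (past \<omega>) (future \<omega>) \<partial>M) = (\<integral>x. \<integral>z. g x z \<partial>cond_kernel x \<partial>first_law M X n)"
proof -
  have K: "(\<lambda>x. distr (cond_kernel x) (past_space \<Otimes>\<^sub>M borel) (Pair x))
      \<in> measurable (first_law M X n) (subprob_algebra (past_space \<Otimes>\<^sub>M borel))"
    by measurable
  have "(\<integral>\<omega>. g (past \<omega>) (future \<omega>) \<partial>M)
      = (\<integral>y. case_prod g y \<partial>distr M (past_space \<Otimes>\<^sub>M borel) (\<lambda>\<omega>. (past \<omega>, future \<omega>)))"
    by (subst integral_distr) simp_all
  also have "\<dots> = (\<integral>x. \<integral>y. case_prod g y \<partial>distr (cond_kernel x) (past_space \<Otimes>\<^sub>M borel) (Pair x)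
      \<partial>first_law M X n)"
    unfolding distr_past_future_eq_bind
  proof (rule integral_bind[OF g _ K, where B'=1])
    show "\<bar>case_prod g y\<bar> \<le> c" for y using bounded by (simp add: split_beta)
    show "finite_measure (first_law M X n)"
      using prob_space_first_law by (rule prob_space.finite_measure)
    show "AE x in first_law M X n. emeasure (distr (cond_kernel x) (past_space \<Otimes>\<^sub>M borel) (Pair x))
        (space (distr (cond_kernel x) (past_space \<Otimes>\<^sub>M borel) (Pair x))) \<le> ennreal 1"
    proof (rule AE_I2)
      fix x assume "x \<in> space (first_law M X n)"
      then have "prob_space (distr (cond_kernel x) (past_space \<Otimes>\<^sub>M borel) (Pair x))"
        using prob_space_cond_kernel measurable_Pair_cond_kernel by (simp add: prob_space.prob_space_distr)
      then show "emeasure (distr (cond_kernel x) (past_space \<Otimes>\<^sub>M borel) (Pair x))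
          (space (distr (cond_kernel x) (past_space \<Otimes>\<^sub>M borel) (Pair x))) \<le> ennreal 1"
        by (metis prob_space.emeasure_space_1 ennreal_1 order.refl)
    qed
  qed
  also have "\<dots> = (\<integral>x. \<integral>z. g x z \<partial>cond_kernel x \<partial>first_law M X n)"
    by (rule Bochner_Integration.integral_cong[OF refl]) (simp add: integral_joint_kernel[OF g])
  finally show ?thesis .
qed

lemma abs_integral_cond_kernel_le:
  fixes g :: "real \<times> real \<Rightarrow> real"
  assumes "g \<in> borel_measurable borel" "\<And>z. \<bar>g z\<bar> \<le> c"
  shows "\<bar>\<integral>z. g z \<partial>cond_kernel x\<bar> \<le> c"
proof -
  interpret K: prob_space "cond_kernel x" by (rule prob_space_cond_kernel)
  have int: "integrable (cond_kernel x) g"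
    using assms by (intro K.integrable_const_bound[where B=c]) auto
  have "g z \<le> c" "-c \<le> g z" for z
    using assms(2)[of z] by auto
  then have "(\<integral>z. g z \<partial>cond_kernel x) \<le> c" "-c \<le> (\<integral>z. g z \<partial>cond_kernel x)"
    by (simp_all add: K.integral_le_const[OF int] K.integral_ge_const[OF int])
  then show ?thesis by simp
qed

lemma integrable_integral_cond_kernel:
  fixes g :: "(nat \<Rightarrow> real) \<Rightarrow> real \<times> real \<Rightarrow> real"
  assumes g [measurable]: "case_prod g \<in> borel_measurable (past_space \<Otimes>\<^sub>M borel)"
    and bounded: "\<And>x z. \<bar>g x z\<bar> \<le> c"
  shows "integrable (first_law M X n) (\<lambda>x. \<integral>z. g x z \<partial>cond_kernel x)"
proof -
  interpret L: prob_space "first_law M X n" by (rule prob_space_first_law)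
  have "\<bar>\<integral>z. g x z \<partial>cond_kernel x\<bar> \<le> c" if "x \<in> space past_space" for x
    using measurable_Pair2[OF g that] bounded by (intro abs_integral_cond_kernel_le) (simp_all add: borel_prod)
  then show ?thesis
    by (intro L.integrable_const_bound[where B=c]) auto
qed

lemma partial_sum_eq_past: "partial_sum X n \<omega> = (\<Sum>i\<in>{1..n}. past \<omega> i)"
  by (simp add: partial_sum_def past_def)

lemma square_integral_survival_le:
  fixes T :: "'a \<Rightarrow> real"
  assumes [measurable]: "T \<in> borel_measurable M" and DFR_T: "DFR (survival M T)"
    and hyp: "\<forall>H. survival_function H \<and> DFR H \<and> H 0 = 1 \<longrightarrow>
      (\<forall>x\<in>N. (\<integral>z. H (fst z) \<partial>\<mu> x)\<^sup>2 \<le> (\<integral>z. H (fst z + snd z) \<partial>\<mu> x))"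
  shows "AE x in first_law M X n.
    (\<integral>z. survival M T (sum x {1..n} + fst z) \<partial>cond_kernel x)\<^sup>2
      \<le> survival M T (sum x {1..n}) * (\<integral>z. survival M T (sum x {1..n} + fst z + snd z) \<partial>cond_kernel x)"
  using AE_first_law_N
proof eventually_elim
  case (elim x)
  let ?s = "sum x {1..n}"
  have s_nonneg: "0 \<le> ?s" using N_nonneg[OF elim] by (intro sum_nonneg) auto
  have "cond_kernel x = \<mu> x" using elim by (simp add: cond_kernel_def)
  show ?case
  proof (rule square_integral_shift_le[OF prob_space_cond_kernel sets_cond_kernel AE_cond_kernel_nonneg])
    show "survival M T \<in> borel_measurable borel" "antimono (survival M T)"
      by (simp_all add: borel_measurable_survival survival_antimono finite_measure_axioms)
    show "0 \<le> survival M T t \<and> survival M T t \<le> 1" for t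
      by (simp add: survival_nonneg survival_le_1)
  next
    assume pos: "0 < survival M T ?s"
    show "(\<integral>z. residual (survival M T) ?s (fst z) \<partial>cond_kernel x)\<^sup>2
        \<le> (\<integral>z. residual (survival M T) ?s (fst z + snd z) \<partial>cond_kernel x)"
    proof -
      have "survival_function (residual (survival M T) ?s)"
        using pos by (intro survival_function_residual prob_space_axioms) simp
      moreover have "DFR (residual (survival M T) ?s)"
        using pos by (intro DFR_residual DFR_T s_nonneg)
      moreover have "residual (survival M T) ?s 0 = 1"
        using pos by simp
      ultimately show ?thesis
        unfolding \<open>cond_kernel x = \<mu> x\<close> using hyp elim by blast
    qed
  qed
qed

lemma integral_survival_partial_sums:
  fixes T :: "'a \<Rightarrow> real"
  assumes [measurable]: "T \<in> borel_measurable M"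
  shows "(\<integral>\<omega>. survival M T (partial_sum X n \<omega>) \<partial>M)
      = (\<integral>x. survival M T (sum x {1..n}) \<partial>first_law M X n)"
    and "(\<integral>\<omega>. survival M T (partial_sum X (n + 1) \<omega>) \<partial>M)
      = (\<integral>x. \<integral>z. survival M T (sum x {1..n} + fst z) \<partial>cond_kernel x \<partial>first_law M X n)"
    and "(\<integral>\<omega>. survival M T (partial_sum X (n + 2) \<omega>) \<partial>M)
      = (\<integral>x. \<integral>z. survival M T (sum x {1..n} + fst z + snd z) \<partial>cond_kernel x \<partial>first_law M X n)"
proof -
  have [measurable]: "survival M T \<in> borel_measurable borel"
    by (simp add: borel_measurable_survival finite_measure_axioms)
  have bounded: "\<bar>survival M T t\<bar> \<le> 1" for t
    by (simp add: survival_nonneg survival_le_1)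
  have sums: "partial_sum X (n + 1) \<omega> = sum (past \<omega>) {1..n} + fst (future \<omega>)"
    "partial_sum X (n + 2) \<omega> = sum (past \<omega>) {1..n} + fst (future \<omega>) + snd (future \<omega>)" for \<omega>
    by (simp_all add: partial_sum_Suc partial_sum_eq_past future_def numeral_2_eq_2 One_nat_def)
  show "(\<integral>\<omega>. survival M T (partial_sum X n \<omega>) \<partial>M)
      = (\<integral>x. survival M T (sum x {1..n}) \<partial>first_law M X n)"
    unfolding first_law_eq partial_sum_eq_past by (subst integral_distr) simp_all
  show "(\<integral>\<omega>. survival M T (partial_sum X (n + 1) \<omega>) \<partial>M)
      = (\<integral>x. \<integral>z. survival M T (sum x {1..n} + fst z) \<partial>cond_kernel x \<partial>first_law M X n)"
    "(\<integral>\<omega>. survival M T (partial_sum X (n + 2) \<omega>) \<partial>M)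
      = (\<integral>x. \<integral>z. survival M T (sum x {1..n} + fst z + snd z) \<partial>cond_kernel x \<partial>first_law M X n)"
    unfolding sums
    by (rule integral_past_future[where c=1], simp add: borel_prod[symmetric], rule bounded)+
qed

lemma square_integral_survival_partial_sum_le:
  fixes T :: "'a \<Rightarrow> real"
  assumes [measurable]: "T \<in> borel_measurable M" and DFR_T: "DFR (survival M T)"
    and hyp: "\<forall>H. survival_function H \<and> DFR H \<and> H 0 = 1 \<longrightarrow>
      (\<forall>x\<in>N. (\<integral>z. H (fst z) \<partial>\<mu> x)\<^sup>2 \<le> (\<integral>z. H (fst z + snd z) \<partial>\<mu> x))"
  shows "(\<integral>\<omega>. survival M T (partial_sum X (n + 1) \<omega>) \<partial>M)\<^sup>2
    \<le> (\<integral>\<omega>. survival M T (partial_sum X n \<omega>) \<partial>M) * (\<integral>\<omega>. survival M T (partial_sum X (n + 2) \<omega>) \<partial>M)"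
  unfolding integral_survival_partial_sums[OF assms(1)]
proof (rule integral_square_le_mult_integral)
  let ?F = "survival M T" and ?L = "first_law M X n"
  have [measurable]: "?F \<in> borel_measurable borel"
    by (simp add: borel_measurable_survival finite_measure_axioms)
  have bounded: "\<bar>?F t\<bar> \<le> 1" for t
    by (simp add: survival_nonneg survival_le_1)
  show "integrable ?L (\<lambda>x. ?F (sum x {1..n}))"
    using bounded by (intro finite_measure.integrable_const_bound[where B=1]
        prob_space.finite_measure prob_space_first_law) auto
  show "integrable ?L (\<lambda>x. \<integral>z. ?F (sum x {1..n} + fst z) \<partial>cond_kernel x)"
    "integrable ?L (\<lambda>x. \<integral>z. ?F (sum x {1..n} + fst z + snd z) \<partial>cond_kernel x)"
    by (intro integrable_integral_cond_kernel[where c=1], simp add: borel_prod[symmetric], rule bounded)+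
  show "AE x in ?L. 0 \<le> ?F (sum x {1..n})"
    "AE x in ?L. 0 \<le> (\<integral>z. ?F (sum x {1..n} + fst z) \<partial>cond_kernel x)"
    "AE x in ?L. 0 \<le> (\<integral>z. ?F (sum x {1..n} + fst z + snd z) \<partial>cond_kernel x)"
    by (simp_all add: survival_nonneg integral_nonneg)
  show "AE x in ?L. (\<integral>z. ?F (sum x {1..n} + fst z) \<partial>cond_kernel x)\<^sup>2
      \<le> ?F (sum x {1..n}) * (\<integral>z. ?F (sum x {1..n} + fst z + snd z) \<partial>cond_kernel x)"
    by (rule square_integral_survival_le[OF assms])
qed

end

theorem proposition3p1:
  fixes M :: "'a measure" and X :: "nat \<Rightarrow> 'a \<Rightarrow> real" and T :: "'a \<Rightarrow> real" and n :: nat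
  assumes "prob_space M"
    and "\<And>k. X k \<in> borel_measurable M"
    and "\<And>k \<omega>. k \<ge> 1 \<Longrightarrow> \<omega> \<in> space M \<Longrightarrow> 0 \<le> X k \<omega>"
    and "T \<in> borel_measurable M"
    and "\<And>\<omega>. \<omega> \<in> space M \<Longrightarrow> 0 \<le> T \<omega>"
    and "DFR (\<lambda>t. measure M {\<omega>\<in>space M. T \<omega> > t})"
    and "prob_space.indep_set M (sets (vimage_algebra (space M) T borel))
           (sets (vimage_algebra (space M) (\<lambda>\<omega>. \<lambda>k\<in>{1..}. X k \<omega>) (Pi\<^sub>M {1..} (\<lambda>_. borel))))"
    and "n \<ge> 1"
    and "\<exists>N \<mu>. regular_cond_distr M X n N \<mu> \<and>
          (\<forall>H. survival_function H \<and> DFR H \<and> H 0 = 1 \<longrightarrow>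
             (\<forall>x\<in>N. (\<integral>z. H (fst z) \<partial>\<mu> x)\<^sup>2 \<le> (\<integral>z. H (fst z + snd z) \<partial>\<mu> x)))"
  shows "(\<integral>\<omega>. measure M {\<omega>'\<in>space M. T \<omega>' > partial_sum X (n+1) \<omega>} \<partial>M)\<^sup>2
         \<le> (\<integral>\<omega>. measure M {\<omega>'\<in>space M. T \<omega>' > partial_sum X n \<omega>} \<partial>M) *
            (\<integral>\<omega>. measure M {\<omega>'\<in>space M. T \<omega>' > partial_sum X (n+2) \<omega>} \<partial>M)"
  \<comment> \<open>Neither are \<open>T \<ge> 0\<close> and \<open>n \<ge> 1\<close>.\<close>
proof -
  obtain N \<mu> where "regular_cond_distr M X n N \<mu>"
    and hyp: "\<forall>H. survival_function H \<and> DFR H \<and> H 0 = 1 \<longrightarrow>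
      (\<forall>x\<in>N. (\<integral>z. H (fst z) \<partial>\<mu> x)\<^sup>2 \<le> (\<integral>z. H (fst z + snd z) \<partial>\<mu> x))"
    using assms(9) by blast
  then interpret regular_cond_pair M X n N \<mu>
    by (intro regular_cond_pair.intro regular_cond_pair_axioms.intro assms(1,2)) (simp_all add: assms(3))
  have "DFR (survival M T)"
    using assms(6) by (simp add: survival_def[abs_def])
  from square_integral_survival_partial_sum_le[OF assms(4) this hyp]
  show ?thesis by (simp add: survival_def)
qed

end
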